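(* Let $m\in\mathbb R$ satisfy $D^-M(m)\le 0\le D^+M(m)$ (i.e. $m$ is a minimizer of $M$), and assume the boundedness condition (B) holds. Then for every $n\in\mathbb N$: \begin{align*} &\mathbb P\Big(\sup_{k\ge n}(\hat m_k-m)>x\Big)\le \exp\{-2(b(x)-a(x))^{-2}\,n\,D^+M(m+x)^2\}\quad\forall x>0,\\ &\mathbb P\Big(\inf_{k\ge n}(\hat m_k-m)<-x\Big)\le \exp\{-2(b(-x)-a(-x))^{-2}\,n\,D^+M(m-x)^2\}\quad\forall x>0,\\ &\mathbb P\Big(\sup_{k\ge n}|\hat m_k-m|>x\Big)\le 2\exp\{-2A(x)^{-2}\,n\,d(x)^2\}\quad\forall x>0, \end{align*} where $A(x):=\max\{b(x)-a(x),\,b(-x)-a(-x)\}$ and $d(x):=\min\{D^+M(m+x),\,-D^+M(m-x)\}\ge 0$. Moreover, if $m$ is the unique minimizing point of $M$, then $d(x)>0$ for every $x>0$ (and also $D^+M(m+x)>0$ and $-D^+M(m-x)>0$ for all $x>0$), so that each of the three bounds decays exponentially fast in $n$.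
   Context: Let $(S,\mathcal S,Q)$ be a probability space and $h:S\times\mathbb R\to\mathbb R$ such that $h(\cdot,t)$ is $\mathcal S$-measurable for every $t\in\mathbb R$ and $h(x,\cdot)$ is convex for every $x\in S$. For $f:\mathbb R\to\mathbb R$ convex, $D^+f$ and $D^-f$ denote its right and left derivatives; $D^\pm h(x,t)$ denotes the one-sided derivatives of $h(x,\cdot)$ at $t$. Assume $\int_S|D^+h(x,t)|\,Q(dx)<\infty$ and $\int_S|D^-h(x,t)|\,Q(dx)<\infty$ for all $t\in\mathbb R$. Fix $t_0\in\mathbb R$ and set $M(t):=\int_S (h(x,t)-h(x,t_0))\,Q(dx)$; $M$ is real-valued and convex with $D^\pm M(t)=\int_S D^\pm h(x,t)\,Q(dx)$. Let $X_1,X_2,\dots$ be i.i.d. $S$-valued random variables on a probability space $(\Omega,\mathcal A,\mathbb P)$ with common law $Q$, let $M_n(t):=\frac1n\sum_{i=1}^n (h(X_i,t)-h(X_i,t_0))$, and let $\hat m_n$ be the smallest minimizing point of $M_n$ (assumed to exist; it is a random variable). Boundedness condition (B): for every $x\neq 0$ there are reals $a(x)<b(x)$ with $a(x)\le D^+h(X_1,m+x)\le b(x)$ almost surely. *)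

theory Defs
  imports "HOL-Probability.Probability"
begin

definition right_deriv :: "(real \<Rightarrow> real) \<Rightarrow> real \<Rightarrow> real" where
  "right_deriv f t = Lim (at_right t) (\<lambda>y. (f y - f t) / (y - t))"

definition left_deriv :: "(real \<Rightarrow> real) \<Rightarrow> real \<Rightarrow> real" where
  "left_deriv f t = Lim (at_left t) (\<lambda>y. (f y - f t) / (y - t))"

definition pop_M :: "'a measure \<Rightarrow> ('a \<Rightarrow> real \<Rightarrow> real) \<Rightarrow> real \<Rightarrow> real \<Rightarrow> real" where
  "pop_M Q h t0 t = (\<integral>x. (h x t - h x t0) \<partial>Q)"

text \<open>Empirical criterion M_n(t) = (1/n) sum_{i=1}^n (h(X_i,t) - h(X_i,t0));
  the sample X_1,...,X_n is X 0, ..., X (n-1).\<close>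
definition emp_M :: "(nat \<Rightarrow> 'b \<Rightarrow> 'a) \<Rightarrow> ('a \<Rightarrow> real \<Rightarrow> real) \<Rightarrow> real \<Rightarrow> nat \<Rightarrow> 'b \<Rightarrow> real \<Rightarrow> real" where
  "emp_M X h t0 n \<omega> t = (\<Sum>i<n. h (X i \<omega>) t - h (X i \<omega>) t0) / real n"

definition smallest_minimizer :: "(real \<Rightarrow> real) \<Rightarrow> real \<Rightarrow> bool" where
  "smallest_minimizer f x \<longleftrightarrow> (\<forall>y. f x \<le> f y) \<and> (\<forall>y. (\<forall>z. f y \<le> f z) \<longrightarrow> x \<le> y)"

end

theory Submission
  imports Defs
begin

text \<open>
  By convexity of the empirical criterion, the smallest minimiser of \<open>M\<^sub>k\<close> lies above \<open>t\<close> only if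
  \<open>\<Sum>i<k. D\<^sup>+h(X\<^sub>i, t) < 0\<close>, and below \<open>t\<close> only if that sum is nonnegative. So the event that
  \<open>m\<^sub>k - m > x\<close> for some \<open>k \<ge> n\<close> is contained in the event that a random walk with i.i.d.
  increments in an interval of length \<open>b(x) - a(x)\<close> and mean \<open>-D\<^sup>+M(m + x) \<le> 0\<close> is
  nonnegative at some time \<open>k \<ge> n\<close>. Exponentially tilting the walk gives a nonnegative product
  of independent factors of mean at most one (Hoeffding's lemma), and Ville's maximal inequality for
  such products bounds the probability of the crossing by \<open>exp (-2 n D\<^sup>+M(m + x)\<^sup>2 / (b(x) - a(x))\<^sup>2)\<close>.
  Differentiation under the integral identifies the mean of the increments, and convexity of \<open>M\<close>
  provides the signs of \<open>D\<^sup>+M(m \<plusminus> x)\<close>.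
\<close>

section \<open>One-sided derivatives of convex functions\<close>

lemma divide_diff_swap: "((a::real) - b) / (c - d) = (b - a) / (d - c)"
  by (metis minus_diff_eq minus_divide_divide)

lemma convex_on_slope_mono:
  fixes f :: "real \<Rightarrow> real"
  assumes f: "convex_on UNIV f" and "x < y" "u < v" "x \<le> u" "y \<le> v"
  shows "(f y - f x) / (y - x) \<le> (f v - f u) / (v - u)"
proof -
  have "(f y - f x) / (y - x) \<le> (f v - f x) / (v - x)"
    using convex_on_slope_le(1)[OF f _ _ \<open>x < y\<close>, of v] assms by (cases "y = v") (auto simp: divide_diff_swap[of "f x"])
  also have "\<dots> \<le> (f v - f u) / (v - u)"
    using convex_on_slope_le(2)[OF f _ _ _ \<open>u < v\<close>, of x] assms by (cases "x = u") (auto simp: divide_diff_swap[of _ "f v"])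
  finally show ?thesis .
qed

lemma mono_on_tendsto_at_right_Inf:
  fixes q :: "real \<Rightarrow> real"
  assumes mono: "mono_on {t<..} q" and bdd: "bdd_below (q ` {t<..})"
  shows "(q \<longlongrightarrow> (INF y\<in>{t<..}. q y)) (at_right t)"
proof (rule order_tendstoI)
  fix c assume "c < (INF y\<in>{t<..}. q y)"
  then have "c < q y" if "t < y" for y
    using cINF_lower[OF bdd, of y] that by force
  then show "eventually (\<lambda>y. c < q y) (at_right t)"
    by (auto simp: eventually_at_right_field intro: exI[of _ "t + 1"])
next
  fix c assume "(INF y\<in>{t<..}. q y) < c"
  then obtain y0 where y0: "t < y0" "q y0 < c"
    using cInf_lessD[of "q ` {t<..}"] by auto
  have "eventually (\<lambda>y. y \<in> {t<..<y0}) (at_right t)"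
    by (rule eventually_at_right_real[OF y0(1)])
  then show "eventually (\<lambda>y. q y < c) (at_right t)"
  proof eventually_elim
    case (elim y)
    with y0 mono_onD[OF mono, of y y0] show ?case by auto
  qed
qed

lemma mono_on_tendsto_at_left_Sup:
  fixes q :: "real \<Rightarrow> real"
  assumes mono: "mono_on {..<t} q" and bdd: "bdd_above (q ` {..<t})"
  shows "(q \<longlongrightarrow> (SUP y\<in>{..<t}. q y)) (at_left t)"
proof (rule order_tendstoI)
  fix c assume "c < (SUP y\<in>{..<t}. q y)"
  then obtain y0 where y0: "y0 < t" "c < q y0"
    using less_cSupD[of "q ` {..<t}"] by auto
  have "eventually (\<lambda>y. y \<in> {y0<..<t}) (at_left t)"
    by (rule eventually_at_left_real[OF y0(1)])
  then show "eventually (\<lambda>y. c < q y) (at_left t)"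
  proof eventually_elim
    case (elim y)
    with y0 mono_onD[OF mono, of y0 y] show ?case by auto
  qed
next
  fix c assume "(SUP y\<in>{..<t}. q y) < c"
  then have "q y < c" if "y < t" for y
    using cSUP_upper[OF _ bdd, of y] that by force
  then show "eventually (\<lambda>y. q y < c) (at_left t)"
    by (auto simp: eventually_at_left_field intro: exI[of _ "t - 1"])
qed

lemma convex_on_right_deriv_tendsto:
  fixes f :: "real \<Rightarrow> real"
  assumes f: "convex_on UNIV f"
  shows "((\<lambda>y. (f y - f t) / (y - t)) \<longlongrightarrow> right_deriv f t) (at_right t)"
proof -
  let ?q = "\<lambda>y. (f y - f t) / (y - t)"
  have "mono_on {t<..} ?q"
    by (auto intro!: mono_onI convex_on_slope_mono[OF f])
  moreover have "bdd_below (?q ` {t<..})"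
    using convex_on_slope_mono[OF f, of "t - 1" t t] by (intro bdd_belowI2) auto
  ultimately have lim: "(?q \<longlongrightarrow> (INF y\<in>{t<..}. ?q y)) (at_right t)"
    by (rule mono_on_tendsto_at_right_Inf)
  then have "right_deriv f t = (INF y\<in>{t<..}. ?q y)"
    unfolding right_deriv_def by (intro tendsto_Lim) simp_all
  with lim show ?thesis by simp
qed

lemma convex_on_left_deriv_tendsto:
  fixes f :: "real \<Rightarrow> real"
  assumes f: "convex_on UNIV f"
  shows "((\<lambda>y. (f y - f t) / (y - t)) \<longlongrightarrow> left_deriv f t) (at_left t)"
proof -
  let ?q = "\<lambda>y. (f y - f t) / (y - t)"
  have "mono_on {..<t} ?q"
  proof (rule mono_onI)
    fix r s assume "r \<in> {..<t}" "s \<in> {..<t}" "r \<le> s"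
    then show "?q r \<le> ?q s"
      using convex_on_slope_mono[OF f, of r t s t] by (simp add: divide_diff_swap[of _ "f t"])
  qed
  moreover have "bdd_above (?q ` {..<t})"
  proof (rule bdd_aboveI2)
    fix y assume "y \<in> {..<t}"
    then show "?q y \<le> (f (t + 1) - f t) / (t + 1 - t)"
      using convex_on_slope_mono[OF f, of y t t "t + 1"] by (simp add: divide_diff_swap[of _ "f t"])
  qed
  ultimately have lim: "(?q \<longlongrightarrow> (SUP y\<in>{..<t}. ?q y)) (at_left t)"
    by (rule mono_on_tendsto_at_left_Sup)
  then have "left_deriv f t = (SUP y\<in>{..<t}. ?q y)"
    unfolding left_deriv_def by (intro tendsto_Lim) simp_all
  with lim show ?thesis by simp
qed

lemma convex_on_right_deriv_le_slope:
  fixes f :: "real \<Rightarrow> real"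
  assumes f: "convex_on UNIV f" and "t < y"
  shows "right_deriv f t \<le> (f y - f t) / (y - t)"
proof (rule tendsto_upperbound[OF convex_on_right_deriv_tendsto[OF f]])
  show "eventually (\<lambda>z. (f z - f t) / (z - t) \<le> (f y - f t) / (y - t)) (at_right t)"
    using eventually_at_right_real[OF \<open>t < y\<close>]
    by eventually_elim (use convex_on_slope_mono[OF f, of t _ t y] in auto)
qed simp

lemma convex_on_slope_le_right_deriv:
  fixes f :: "real \<Rightarrow> real"
  assumes f: "convex_on UNIV f" and "y < t"
  shows "(f t - f y) / (t - y) \<le> right_deriv f t"
proof (rule tendsto_lowerbound[OF convex_on_right_deriv_tendsto[OF f]])
  show "eventually (\<lambda>z. (f t - f y) / (t - y) \<le> (f z - f t) / (z - t)) (at_right t)"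
    using eventually_at_right_less[of t]
    by eventually_elim (use convex_on_slope_mono[OF f, of y t t] \<open>y < t\<close> in auto)
qed simp

lemma convex_on_slope_le_left_deriv:
  fixes f :: "real \<Rightarrow> real"
  assumes f: "convex_on UNIV f" and "y < t"
  shows "(f t - f y) / (t - y) \<le> left_deriv f t"
proof (rule tendsto_lowerbound[OF convex_on_left_deriv_tendsto[OF f]])
  show "eventually (\<lambda>z. (f t - f y) / (t - y) \<le> (f z - f t) / (z - t)) (at_left t)"
    using eventually_at_left_real[OF \<open>y < t\<close>]
    by eventually_elim (use convex_on_slope_mono[OF f, of y t _ t] in \<open>auto simp: divide_diff_swap[of _ "f t"]\<close>)
qed simp

lemma convex_on_right_deriv_mono:
  fixes f :: "real \<Rightarrow> real"
  assumes f: "convex_on UNIV f" and "s < t"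
  shows "right_deriv f s \<le> right_deriv f t"
  using convex_on_right_deriv_le_slope[OF assms] convex_on_slope_le_right_deriv[OF assms] by simp

lemma convex_on_right_deriv_le_left_deriv:
  fixes f :: "real \<Rightarrow> real"
  assumes f: "convex_on UNIV f" and "s < t"
  shows "right_deriv f s \<le> left_deriv f t"
  using convex_on_right_deriv_le_slope[OF assms] convex_on_slope_le_left_deriv[OF assms] by simp

lemma convex_on_diff_le_right_derivs:
  fixes f :: "real \<Rightarrow> real"
  assumes f: "convex_on UNIV f"
  shows "\<bar>f t - f s\<bar> \<le> \<bar>t - s\<bar> * (\<bar>right_deriv f s\<bar> + \<bar>right_deriv f t\<bar>)"
proof -
  have *: "\<bar>f v - f u\<bar> \<le> \<bar>v - u\<bar> * (\<bar>right_deriv f u\<bar> + \<bar>right_deriv f v\<bar>)" if uv: "u < v" for u v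
  proof -
    let ?d = "(f v - f u) / (v - u)"
    have "\<bar>?d\<bar> \<le> \<bar>right_deriv f u\<bar> + \<bar>right_deriv f v\<bar>"
      using convex_on_right_deriv_le_slope[OF f uv] convex_on_slope_le_right_deriv[OF f uv] by linarith
    moreover have "\<bar>f v - f u\<bar> = \<bar>v - u\<bar> * \<bar>?d\<bar>"
      using uv by (simp add: abs_div)
    ultimately show ?thesis by (metis abs_ge_zero mult_left_mono)
  qed
  show ?thesis
  proof (cases s t rule: linorder_cases)
    case greater
    with *[of t s] show ?thesis by (simp add: abs_minus_commute add.commute)
  qed (use *[of s t] in simp_all)
qed

lemma convex_on_unique_argmin_right_deriv_pos:
  fixes f :: "real \<Rightarrow> real"
  assumes f: "convex_on UNIV f" and argmin: "\<And>t. (\<forall>s. f t \<le> f s) \<longleftrightarrow> t = m" and "m < y"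
  shows "0 < right_deriv f y"
proof (rule ccontr)
  assume "\<not> 0 < right_deriv f y"
  with convex_on_slope_le_right_deriv[OF f \<open>m < y\<close>] have "(f y - f m) / (y - m) \<le> 0"
    by simp
  with \<open>m < y\<close> have "f y \<le> f m"
    by (simp add: divide_le_0_iff)
  with argmin[of m] have "\<forall>s. f y \<le> f s" by (meson order_trans)
  with argmin[of y] \<open>m < y\<close> show False by simp
qed

lemma convex_on_unique_argmin_right_deriv_neg:
  fixes f :: "real \<Rightarrow> real"
  assumes f: "convex_on UNIV f" and argmin: "\<And>t. (\<forall>s. f t \<le> f s) \<longleftrightarrow> t = m" and "y < m"
  shows "right_deriv f y < 0"
proof (rule ccontr)
  assume "\<not> right_deriv f y < 0"
  with convex_on_right_deriv_le_slope[OF f \<open>y < m\<close>] have "0 \<le> (f m - f y) / (m - y)"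
    by simp
  with \<open>y < m\<close> have "f y \<le> f m"
    by (simp add: zero_le_divide_iff)
  with argmin[of m] have "\<forall>s. f y \<le> f s" by (meson order_trans)
  with argmin[of y] \<open>y < m\<close> show False by simp
qed

section \<open>The population criterion\<close>

locale convex_loss =
  fixes Q :: "'a measure" and h :: "'a \<Rightarrow> real \<Rightarrow> real"
  assumes measurable_loss: "\<And>t. (\<lambda>x. h x t) \<in> borel_measurable Q"
    and convex_loss: "\<And>x. x \<in> space Q \<Longrightarrow> convex_on UNIV (h x)"
    and integrable_right_deriv: "\<And>t. integrable Q (\<lambda>x. right_deriv (h x) t)"
begin

lemma measurable_right_deriv: "(\<lambda>x. right_deriv (h x) t) \<in> borel_measurable Q"
  using integrable_right_deriv by auto

lemma integrable_loss_diff: "integrable Q (\<lambda>x. h x t - h x s)"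
proof (rule Bochner_Integration.integrable_bound)
  show "integrable Q (\<lambda>x. \<bar>t - s\<bar> * (\<bar>right_deriv (h x) s\<bar> + \<bar>right_deriv (h x) t\<bar>))"
    using integrable_right_deriv by auto
  show "(\<lambda>x. h x t - h x s) \<in> borel_measurable Q"
    using measurable_loss by measurable
  show "AE x in Q. norm (h x t - h x s) \<le> norm (\<bar>t - s\<bar> * (\<bar>right_deriv (h x) s\<bar> + \<bar>right_deriv (h x) t\<bar>))"
    using convex_on_diff_le_right_derivs[OF convex_loss] by (auto intro!: AE_I2)
qed

lemma pop_M_diff: "pop_M Q h t0 t - pop_M Q h t0 s = (\<integral>x. h x t - h x s \<partial>Q)"
  unfolding pop_M_def
  by (subst Bochner_Integration.integral_diff[symmetric]) (auto intro!: integrable_loss_diff)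

lemma convex_pop_M: "convex_on UNIV (pop_M Q h t0)"
proof (rule convex_onI)
  fix u x y :: real assume u: "0 < u" "u < 1"
  have "pop_M Q h t0 ((1 - u) *\<^sub>R x + u *\<^sub>R y) - pop_M Q h t0 t0
        = (\<integral>z. h z ((1 - u) * x + u * y) - h z t0 \<partial>Q)"
    by (simp add: pop_M_diff)
  also have "\<dots> \<le> (\<integral>z. (1 - u) * (h z x - h z t0) + u * (h z y - h z t0) \<partial>Q)"
  proof (rule integral_mono)
    fix z assume "z \<in> space Q"
    from convex_onD[OF convex_loss[OF this], of u x y] u
    show "h z ((1 - u) * x + u * y) - h z t0 \<le> (1 - u) * (h z x - h z t0) + u * (h z y - h z t0)"
      by (simp add: algebra_simps)
  qed (intro Bochner_Integration.integrable_add integrable_mult_right integrable_loss_diff)+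
  also have "\<dots> = (1 - u) * pop_M Q h t0 x + u * pop_M Q h t0 y"
    unfolding pop_M_def by (simp add: integrable_loss_diff)
  finally show "pop_M Q h t0 ((1 - u) *\<^sub>R x + u *\<^sub>R y) \<le> (1 - u) * pop_M Q h t0 x + u * pop_M Q h t0 y"
    by (simp add: pop_M_def)
qed simp

text \<open>Dominated convergence along \<open>t + 1/(j+1)\<close>: the difference quotients of \<open>h x\<close> lie between
  the right derivative at \<open>t\<close> and the quotient over \<open>[t, t + 1]\<close>.\<close>

lemma right_deriv_pop_M: "right_deriv (pop_M Q h t0) t = (\<integral>x. right_deriv (h x) t \<partial>Q)"
proof -
  define z where "z j = t + inverse (real (Suc j))" for j
  have zt: "t < z j" and z1: "z j \<le> t + 1" for j
    by (auto simp: z_def field_simps)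
  have "z \<longlonglongrightarrow> t"
    unfolding z_def using tendsto_add[OF tendsto_const LIMSEQ_inverse_real_of_nat] by simp
  then have z: "filterlim z (at_right t) sequentially"
    by (rule tendsto_imp_filterlim_at_right) (use zt in auto)
  define q where "q j x = (h x (z j) - h x t) / (z j - t)" for j x
  have "(\<lambda>j. \<integral>x. q j x \<partial>Q) \<longlonglongrightarrow> (\<integral>x. right_deriv (h x) t \<partial>Q)"
  proof (rule integral_dominated_convergence[where w="\<lambda>x. \<bar>right_deriv (h x) t\<bar> + \<bar>h x (t + 1) - h x t\<bar>"])
    show "q j \<in> borel_measurable Q" for j
      unfolding q_def using measurable_loss by measurable
    show "integrable Q (\<lambda>x. \<bar>right_deriv (h x) t\<bar> + \<bar>h x (t + 1) - h x t\<bar>)"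
      using integrable_right_deriv integrable_loss_diff by auto
    show "AE x in Q. (\<lambda>j. q j x) \<longlonglongrightarrow> right_deriv (h x) t"
      unfolding q_def
      by (intro AE_I2 filterlim_compose[OF convex_on_right_deriv_tendsto z] convex_loss)
    show "AE x in Q. norm (q j x) \<le> \<bar>right_deriv (h x) t\<bar> + \<bar>h x (t + 1) - h x t\<bar>" for j
    proof (rule AE_I2)
      fix x assume "x \<in> space Q"
      note f = convex_loss[OF this]
      have "right_deriv (h x) t \<le> q j x"
        unfolding q_def by (rule convex_on_right_deriv_le_slope[OF f zt])
      moreover have "q j x \<le> h x (t + 1) - h x t"
        unfolding q_def using convex_on_slope_mono[OF f, of t "z j" t "t + 1"] zt z1 by auto
      ultimately show "norm (q j x) \<le> \<bar>right_deriv (h x) t\<bar> + \<bar>h x (t + 1) - h x t\<bar>"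
        by auto
    qed
  qed (rule measurable_right_deriv)
  moreover have "(\<lambda>j. \<integral>x. q j x \<partial>Q) \<longlonglongrightarrow> right_deriv (pop_M Q h t0) t"
  proof -
    have "(\<integral>x. q j x \<partial>Q) = (pop_M Q h t0 (z j) - pop_M Q h t0 t) / (z j - t)" for j
      unfolding q_def pop_M_diff by simp
    then show ?thesis
      using filterlim_compose[OF convex_on_right_deriv_tendsto[OF convex_pop_M] z] by simp
  qed
  ultimately show ?thesis
    by (rule LIMSEQ_unique[rotated])
qed

end

section \<open>Ville's inequality for products of independent factors\<close>

lemma (in prob_space) indep_var_nn_integral_mult:
  fixes X Y :: "'a \<Rightarrow> real"
  assumes indep: "indep_var borel X borel Y" and nonneg: "\<And>\<omega>. 0 \<le> X \<omega>" "\<And>\<omega>. 0 \<le> Y \<omega>"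
  shows "(\<integral>\<^sup>+\<omega>. X \<omega> * Y \<omega> \<partial>M) = (\<integral>\<^sup>+\<omega>. X \<omega> \<partial>M) * (\<integral>\<^sup>+\<omega>. Y \<omega> \<partial>M)"
proof -
  have "indep_var borel (ennreal \<circ> X) borel (ennreal \<circ> Y)"
    by (rule indep_var_compose[OF indep]) auto
  then have "indep_vars (\<lambda>_. borel) (case_bool (ennreal \<circ> X) (ennreal \<circ> Y)) UNIV"
    unfolding indep_var_def
    by (rule indep_vars_cong[THEN iffD1, rotated 3]) (auto split: bool.split)
  then have "(\<integral>\<^sup>+\<omega>. (\<Prod>b\<in>UNIV. case_bool (ennreal \<circ> X) (ennreal \<circ> Y) b \<omega>) \<partial>M)
             = (\<Prod>b\<in>UNIV. \<integral>\<^sup>+\<omega>. case_bool (ennreal \<circ> X) (ennreal \<circ> Y) b \<omega> \<partial>M)"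
    by (intro indep_vars_nn_integral) auto
  then show ?thesis
    using nonneg by (simp add: UNIV_bool ennreal_mult comp_def mult.commute)
qed

lemma (in prob_space) indep_var_prefix_function:
  fixes Y :: "nat \<Rightarrow> 'a \<Rightarrow> real"
  assumes indep: "indep_vars (\<lambda>_. borel) Y UNIV"
    and F: "F \<in> borel_measurable (PiM {..<j} (\<lambda>_. borel))"
  shows "indep_var borel (\<lambda>\<omega>. F (restrict (\<lambda>i. Y i \<omega>) {..<j})) borel (Y j)"
proof -
  have "indep_var (PiM {..<j} (\<lambda>_. borel)) (\<lambda>\<omega>. restrict (\<lambda>i. Y i \<omega>) {..<j})
                  (PiM {j} (\<lambda>_. borel)) (\<lambda>\<omega>. restrict (\<lambda>i. Y i \<omega>) {j})"
    by (rule indep_var_restrict[OF indep]) auto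
  then have "indep_var borel (F \<circ> (\<lambda>\<omega>. restrict (\<lambda>i. Y i \<omega>) {..<j}))
                       borel ((\<lambda>y. y j) \<circ> (\<lambda>\<omega>. restrict (\<lambda>i. Y i \<omega>) {j}))"
    by (rule indep_var_compose[OF _ F]) measurable
  then show ?thesis
    by (simp add: comp_def)
qed

definition killed_prod :: "real \<Rightarrow> (nat \<Rightarrow> real) \<Rightarrow> nat \<Rightarrow> real" where
  "killed_prod c y j = (if \<forall>i\<le>j. (\<Prod>k<i. y k) < c then (\<Prod>k<j. y k) else 0)"

lemma killed_prod_restrict: "killed_prod c (restrict y {..<j}) j = killed_prod c y j"
  unfolding killed_prod_def by (auto intro!: prod.cong)

lemma measurable_killed_prod:
  "(\<lambda>y. killed_prod c y j) \<in> borel_measurable (PiM {..<j} (\<lambda>_. borel))"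
proof -
  have [measurable]: "(\<lambda>y. \<Prod>k<i. y k :: real) \<in> borel_measurable (PiM {..<j} (\<lambda>_. borel))"
    if "i \<le> j" for i
  proof (rule borel_measurable_prod)
    fix k assume "k \<in> {..<i}"
    with that show "(\<lambda>y. y k) \<in> borel_measurable (PiM {..<j} (\<lambda>_. borel))"
      using measurable_component_singleton[of k "{..<j}" "\<lambda>_. borel"] by simp
  qed
  have "{y \<in> space (PiM {..<j} (\<lambda>_. borel)). \<forall>i\<in>{..j}. (\<Prod>k<i. y k) < c}
        \<in> sets (PiM {..<j} (\<lambda>_. borel))"
    by (intro sets.sets_Collect_finite_All) auto
  then show ?thesis
    unfolding killed_prod_def atMost_iff[symmetric] by measurable
qed

lemma killed_prod_Suc:
  "killed_prod c y j * y j
   = killed_prod c y (Suc j)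
     + (if (\<forall>i\<le>j. (\<Prod>k<i. y k) < c) \<and> c \<le> (\<Prod>k<Suc j. y k) then \<Prod>k<Suc j. y k else 0)"
  unfolding killed_prod_def by (auto simp: le_Suc_eq not_less)

context prob_space
begin

lemma killed_prod_step:
  fixes Y :: "nat \<Rightarrow> 'a \<Rightarrow> real" and c :: real
  assumes indep: "indep_vars (\<lambda>_. borel) Y UNIV" and nonneg: "\<And>i \<omega>. 0 \<le> Y i \<omega>"
    and mean: "\<And>i. (\<integral>\<^sup>+\<omega>. Y i \<omega> \<partial>M) \<le> 1"
  defines "E j \<equiv> {\<omega> \<in> space M. \<exists>i\<le>j. c \<le> (\<Prod>k<i. Y k \<omega>)}"
    and "G j \<omega> \<equiv> killed_prod c (\<lambda>i. Y i \<omega>) j"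
  shows "c * emeasure M (E (Suc j)) + (\<integral>\<^sup>+\<omega>. G (Suc j) \<omega> \<partial>M)
         \<le> c * emeasure M (E j) + (\<integral>\<^sup>+\<omega>. G j \<omega> \<partial>M)"
proof -
  have [measurable]: "Y i \<in> borel_measurable M" for i
    using indep by (auto simp: indep_vars_def)
  have G_restrict: "G j \<omega> = killed_prod c (restrict (\<lambda>i. Y i \<omega>) {..<j}) j" for j \<omega>
    by (simp add: G_def killed_prod_restrict)
  have [measurable]: "G i \<in> borel_measurable M" for i
    unfolding G_def killed_prod_def by measurable
  have G_nonneg: "0 \<le> G j \<omega>" for j \<omega>
    using nonneg by (auto simp: G_def killed_prod_def intro: prod_nonneg)
  define A where "A = {\<omega> \<in> space M. (\<forall>i\<le>j. (\<Prod>k<i. Y k \<omega>) < c) \<and> c \<le> (\<Prod>k<Suc j. Y k \<omega>)}"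
  have [measurable]: "A \<in> sets M" "E j \<in> sets M"
    unfolding A_def E_def by measurable
  have pointwise: "ennreal (indicator A \<omega> * (\<Prod>k<Suc j. Y k \<omega>)) + ennreal (G (Suc j) \<omega>)
                   = ennreal (G j \<omega> * Y j \<omega>)" if "\<omega> \<in> space M" for \<omega>
    using that killed_prod_Suc[of c "\<lambda>i. Y i \<omega>" j] G_nonneg[of "Suc j" \<omega>] prod_nonneg[OF nonneg]
    by (auto simp: G_def A_def ennreal_plus)
  have "E (Suc j) = E j \<union> A" "E j \<inter> A = {}"
    unfolding E_def A_def by (auto simp: le_Suc_eq not_less)
  then have "c * emeasure M (E (Suc j)) = c * emeasure M (E j) + c * emeasure M A"
    by (simp add: plus_emeasure[symmetric] distrib_left)
  also have "c * emeasure M A \<le> (\<integral>\<^sup>+\<omega>. indicator A \<omega> * (\<Prod>k<Suc j. Y k \<omega>) \<partial>M)"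
    unfolding nn_integral_cmult_indicator[symmetric, OF \<open>A \<in> sets M\<close>]
    by (intro nn_integral_mono) (auto simp: A_def indicator_def intro: ennreal_leI)
  finally have "c * emeasure M (E (Suc j)) + (\<integral>\<^sup>+\<omega>. G (Suc j) \<omega> \<partial>M)
      \<le> c * emeasure M (E j) + ((\<integral>\<^sup>+\<omega>. indicator A \<omega> * (\<Prod>k<Suc j. Y k \<omega>) \<partial>M) + (\<integral>\<^sup>+\<omega>. G (Suc j) \<omega> \<partial>M))"
    by (simp add: add.assoc add_right_mono)
  also have "(\<integral>\<^sup>+\<omega>. indicator A \<omega> * (\<Prod>k<Suc j. Y k \<omega>) \<partial>M) + (\<integral>\<^sup>+\<omega>. G (Suc j) \<omega> \<partial>M)
             = (\<integral>\<^sup>+\<omega>. G j \<omega> * Y j \<omega> \<partial>M)"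
    by (subst nn_integral_add[symmetric]) (auto intro!: nn_integral_cong pointwise simp del: prod.lessThan_Suc)
  also have "\<dots> = (\<integral>\<^sup>+\<omega>. G j \<omega> \<partial>M) * (\<integral>\<^sup>+\<omega>. Y j \<omega> \<partial>M)"
    unfolding G_restrict
    by (intro indep_var_nn_integral_mult indep_var_prefix_function[OF indep measurable_killed_prod]
          G_nonneg[unfolded G_restrict] nonneg)
  also have "\<dots> \<le> (\<integral>\<^sup>+\<omega>. G j \<omega> \<partial>M)"
    using mult_left_mono[OF mean[of j], of "\<integral>\<^sup>+\<omega>. G j \<omega> \<partial>M"] by simp
  finally show ?thesis
    by (simp add: add_left_mono)
qed

lemma killed_prod_bound:
  fixes Y :: "nat \<Rightarrow> 'a \<Rightarrow> real" and c :: real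
  assumes indep: "indep_vars (\<lambda>_. borel) Y UNIV" and nonneg: "\<And>i \<omega>. 0 \<le> Y i \<omega>"
    and mean: "\<And>i. (\<integral>\<^sup>+\<omega>. Y i \<omega> \<partial>M) \<le> 1"
  shows "c * emeasure M {\<omega> \<in> space M. \<exists>i\<le>j. c \<le> (\<Prod>k<i. Y k \<omega>)}
           + (\<integral>\<^sup>+\<omega>. killed_prod c (\<lambda>i. Y i \<omega>) j \<partial>M) \<le> 1"
proof (induction j)
  case 0
  show ?case
  proof (cases "c \<le> 1")
    case True
    then have "{\<omega> \<in> space M. \<exists>i\<le>0. c \<le> (\<Prod>k<i. Y k \<omega>)} = space M" "killed_prod c y 0 = 0" for y
      by (auto simp: killed_prod_def)
    with True show ?thesis
      by (simp only:) (simp add: emeasure_space_1 ennreal_le_1)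
  next
    case False
    then have "{\<omega> \<in> space M. \<exists>i\<le>0. c \<le> (\<Prod>k<i. Y k \<omega>)} = {}" "killed_prod c y 0 = 1" for y
      by (auto simp: killed_prod_def)
    then show ?thesis
      by (simp only:) (simp add: emeasure_space_1)
  qed
next
  case (Suc j)
  with killed_prod_step[OF indep nonneg mean, of c j] show ?case
    by order
qed

theorem ville_inequality:
  fixes Y :: "nat \<Rightarrow> 'a \<Rightarrow> real" and c :: real
  assumes indep: "indep_vars (\<lambda>_. borel) Y UNIV" and nonneg: "\<And>i \<omega>. 0 \<le> Y i \<omega>"
    and mean: "\<And>i. (\<integral>\<^sup>+\<omega>. Y i \<omega> \<partial>M) \<le> 1"
  shows "c * prob {\<omega> \<in> space M. \<exists>k. c \<le> (\<Prod>i<k. Y i \<omega>)} \<le> 1"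
proof -
  define E where "E j = {\<omega> \<in> space M. \<exists>i\<le>j. c \<le> (\<Prod>k<i. Y k \<omega>)}" for j
  have [measurable]: "Y i \<in> borel_measurable M" for i
    using indep by (auto simp: indep_vars_def)
  have [measurable]: "E j \<in> sets M" for j
    unfolding E_def by measurable
  have bound: "c * emeasure M (E j) \<le> 1" for j
    using killed_prod_bound[OF indep nonneg mean, of c j] unfolding E_def
    by (rule order_trans[OF add_increasing2[OF zero_le order_refl]])
  have "c * emeasure M (\<Union>j. E j) = (SUP j. c * emeasure M (E j))"
    by (subst SUP_emeasure_incseq[symmetric]) (auto simp: incseq_def E_def SUP_mult_left_ennreal intro: order_trans)
  also have "\<dots> \<le> 1"
    using bound by (intro SUP_least)
  also have "(\<Union>j. E j) = {\<omega> \<in> space M. \<exists>k. c \<le> (\<Prod>i<k. Y i \<omega>)}"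
    unfolding E_def by auto
  finally have "ennreal c * ennreal (prob {\<omega> \<in> space M. \<exists>k. c \<le> (\<Prod>i<k. Y i \<omega>)}) \<le> 1"
    by (simp add: emeasure_eq_measure)
  then show ?thesis
  proof (cases "c \<le> 0")
    case True
    then show ?thesis
      by (smt (verit) measure_nonneg mult_nonpos_nonneg)
  qed (simp add: ennreal_mult[symmetric] ennreal_le_1)
qed

end

section \<open>A maximal Hoeffding inequality\<close>

lemma (in interval_bounded_random_variable) nn_integral_exp_tilt_le_1:
  assumes "0 < l"
  shows "(\<integral>\<^sup>+x. exp (l * (f x - expectation f) - l\<^sup>2 * (b - a)\<^sup>2 / 8) \<partial>M) \<le> 1"
proof -
  let ?c = "l\<^sup>2 * (b - a)\<^sup>2 / 8"
  have "(\<integral>\<^sup>+x. exp (l * (f x - expectation f) - ?c) \<partial>M)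
        = exp (- ?c) * (\<integral>\<^sup>+x. exp (l * (f x - expectation f)) \<partial>M)"
    by (subst nn_integral_cmult[symmetric])
       (auto intro!: nn_integral_cong simp: ennreal_mult[symmetric] exp_add[symmetric])
  also have "\<dots> \<le> ennreal (exp (- ?c)) * exp ?c"
    by (rule mult_left_mono[OF Hoeffdings_lemma_nn_integral[OF assms]]) simp
  also have "\<dots> = 1"
    by (simp add: ennreal_mult[symmetric] exp_add[symmetric])
  finally show ?thesis .
qed

text \<open>\<open>l\<close> is the tilt maximising \<open>- l \<mu> - l\<^sup>2 w / 8\<close>; the maximum \<open>2 \<mu>\<^sup>2 / w\<close> is the rate.\<close>

lemma tilted_product_ge:
  fixes v :: "nat \<Rightarrow> real"
  assumes "\<mu> < 0" "0 < w" "n \<le> k" "0 \<le> (\<Sum>i<k. v i)"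
  defines "l \<equiv> - 4 * \<mu> / w"
  shows "exp (2 * real n * \<mu>\<^sup>2 / w) \<le> (\<Prod>i<k. exp (l * (v i - \<mu>) - l\<^sup>2 * w / 8))"
proof -
  have "0 < l"
    using assms(1,2) by (simp add: l_def divide_neg_pos)
  have "2 * real n * \<mu>\<^sup>2 / w \<le> 2 * real k * \<mu>\<^sup>2 / w"
    using assms(2,3) by (intro divide_right_mono mult_right_mono) auto
  also have "\<dots> = real k * (- l * \<mu> - l\<^sup>2 * w / 8)"
    using assms(2) by (simp add: l_def power2_eq_square field_simps)
  also have "\<dots> \<le> l * (\<Sum>i<k. v i) + real k * (- l * \<mu> - l\<^sup>2 * w / 8)"
    using \<open>0 < l\<close> assms(4) by simp
  also have "\<dots> = (\<Sum>i<k. l * (v i - \<mu>) - l\<^sup>2 * w / 8)"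
    by (simp add: sum_subtractf sum_distrib_left algebra_simps)
  finally show ?thesis
    by (simp add: exp_sum[symmetric])
qed

lemma (in prob_space) prob_random_walk_nonneg:
  fixes V :: "nat \<Rightarrow> 'a \<Rightarrow> real" and \<alpha> \<beta> \<mu> :: real
  assumes indep: "indep_vars (\<lambda>_. borel) V UNIV"
    and bounded: "\<And>i. AE \<omega> in M. V i \<omega> \<in> {\<alpha>..\<beta>}"
    and mean: "\<And>i. expectation (V i) = \<mu>" "\<mu> \<le> 0"
  shows "prob {\<omega> \<in> space M. \<exists>k\<ge>n. 0 \<le> (\<Sum>i<k. V i \<omega>)} \<le> exp (- 2 * real n * \<mu>\<^sup>2 / (\<beta> - \<alpha>)\<^sup>2)"
proof (cases "\<mu> = 0 \<or> \<beta> - \<alpha> = 0")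
  case False
  define w where "w = (\<beta> - \<alpha>)\<^sup>2"
  with False mean(2) have \<mu>: "\<mu> < 0" and w: "0 < w"
    by auto
  define l where "l = - 4 * \<mu> / w"
  define Y where "Y i \<omega> = exp (l * (V i \<omega> - \<mu>) - l\<^sup>2 * w / 8)" for i \<omega>
  define c where "c = exp (2 * real n * \<mu>\<^sup>2 / w)"
  have [measurable]: "V i \<in> borel_measurable M" for i
    using indep by (auto simp: indep_vars_def)
  have indep_Y: "indep_vars (\<lambda>_. borel) Y UNIV"
    unfolding Y_def by (rule indep_vars_compose2[OF indep]) measurable
  have mean_Y: "(\<integral>\<^sup>+\<omega>. Y i \<omega> \<partial>M) \<le> 1" for i
  proof -
    interpret interval_bounded_random_variable M "V i" \<alpha> \<beta>
      by unfold_locales (measurable, rule bounded)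
    show ?thesis
      using nn_integral_exp_tilt_le_1[of l] \<mu> w by (simp add: Y_def w_def l_def mean divide_neg_pos)
  qed
  have "prob {\<omega> \<in> space M. \<exists>k\<ge>n. 0 \<le> (\<Sum>i<k. V i \<omega>)} \<le> prob {\<omega> \<in> space M. \<exists>k. c \<le> (\<Prod>i<k. Y i \<omega>)}"
    using tilted_product_ge[OF \<mu> w] unfolding Y_def c_def l_def
    by (intro finite_measure_mono) (auto, measurable)
  also have "\<dots> \<le> 1 / c"
    using ville_inequality[OF indep_Y _ mean_Y, of c] by (simp add: Y_def c_def field_simps)
  finally show ?thesis
    by (simp add: c_def w_def exp_minus field_simps)
qed auto

lemma (in prob_space) hoeffding_maximal_inequality:
  fixes X :: "nat \<Rightarrow> 'a \<Rightarrow> 'b" and f :: "'b \<Rightarrow> real" and \<alpha> \<beta> :: real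
  assumes indep: "indep_vars (\<lambda>_. N) X UNIV"
    and law: "\<And>i. distr M N (X i) = N"
    and f [measurable]: "f \<in> borel_measurable N"
    and bounded: "AE x in N. f x \<in> {\<alpha>..\<beta>}"
    and mean: "(\<integral>x. f x \<partial>N) \<le> 0"
  shows "prob {\<omega> \<in> space M. \<exists>k\<ge>n. 0 \<le> (\<Sum>i<k. f (X i \<omega>))}
           \<le> exp (- 2 * real n * (\<integral>x. f x \<partial>N)\<^sup>2 / (\<beta> - \<alpha>)\<^sup>2)"
proof (rule prob_random_walk_nonneg[OF _ _ _ mean])
  have [measurable]: "X i \<in> measurable M N" for i
    using indep by (auto simp: indep_vars_def)
  show "indep_vars (\<lambda>_. borel) (\<lambda>i \<omega>. f (X i \<omega>)) UNIV"
    by (rule indep_vars_compose2[OF indep]) measurable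
  show "expectation (\<lambda>\<omega>. f (X i \<omega>)) = (\<integral>x. f x \<partial>N)" for i
    using integral_distr[of "X i" M N f] by (simp add: law)
  have "{x \<in> space N. f x \<in> {\<alpha>..\<beta>}} \<in> sets N"
    by measurable
  moreover have "AE x in distr M N (X i). f x \<in> {\<alpha>..\<beta>}" for i
    by (simp only: law bounded)
  ultimately show "AE \<omega> in M. f (X i \<omega>) \<in> {\<alpha>..\<beta>}" for i
    using AE_distr_iff[of "X i" M N "\<lambda>x. f x \<in> {\<alpha>..\<beta>}"] by simp
qed

section \<open>Minimisers of sums of convex functions\<close>

lemma smallest_minimizer_less:
  assumes "smallest_minimizer f y" and "t < y"
  shows "f y < f t"
  using assms unfolding smallest_minimizer_def by (meson linorder_not_le order_trans)

lemma convex_sum_right_deriv_neg: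
  fixes f :: "'i \<Rightarrow> real \<Rightarrow> real"
  assumes convex: "\<And>i. i \<in> I \<Longrightarrow> convex_on UNIV (f i)" and "t < y"
    and descent: "(\<Sum>i\<in>I. f i y) < (\<Sum>i\<in>I. f i t)"
  shows "(\<Sum>i\<in>I. right_deriv (f i) t) < 0"
proof -
  have "(\<Sum>i\<in>I. right_deriv (f i) t) \<le> (\<Sum>i\<in>I. (f i y - f i t) / (y - t))"
    by (intro sum_mono convex_on_right_deriv_le_slope convex \<open>t < y\<close>)
  also have "\<dots> = ((\<Sum>i\<in>I. f i y) - (\<Sum>i\<in>I. f i t)) / (y - t)"
    by (simp add: sum_divide_distrib[symmetric] sum_subtractf)
  also have "\<dots> < 0"
    using descent \<open>t < y\<close> by (simp add: divide_neg_pos)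
  finally show ?thesis .
qed

lemma convex_sum_right_deriv_nonneg:
  fixes f :: "'i \<Rightarrow> real \<Rightarrow> real"
  assumes convex: "\<And>i. i \<in> I \<Longrightarrow> convex_on UNIV (f i)" and "y < t"
    and descent: "(\<Sum>i\<in>I. f i y) \<le> (\<Sum>i\<in>I. f i t)"
  shows "0 \<le> (\<Sum>i\<in>I. right_deriv (f i) t)"
proof -
  have "0 \<le> ((\<Sum>i\<in>I. f i t) - (\<Sum>i\<in>I. f i y)) / (t - y)"
    using descent \<open>y < t\<close> by simp
  also have "\<dots> = (\<Sum>i\<in>I. (f i t - f i y) / (t - y))"
    by (simp add: sum_divide_distrib[symmetric] sum_subtractf)
  also have "\<dots> \<le> (\<Sum>i\<in>I. right_deriv (f i) t)"
    by (intro sum_mono convex_on_slope_le_right_deriv convex \<open>y < t\<close>)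
  finally show ?thesis .
qed

lemma emp_M_le_iff:
  assumes "1 \<le> k"
  shows "emp_M X h t0 k \<omega> y \<le> emp_M X h t0 k \<omega> t \<longleftrightarrow> (\<Sum>i<k. h (X i \<omega>) y) \<le> (\<Sum>i<k. h (X i \<omega>) t)"
  using assms by (simp add: emp_M_def divide_le_cancel sum_subtractf)

lemma emp_M_less_iff:
  assumes "1 \<le> k"
  shows "emp_M X h t0 k \<omega> y < emp_M X h t0 k \<omega> t \<longleftrightarrow> (\<Sum>i<k. h (X i \<omega>) y) < (\<Sum>i<k. h (X i \<omega>) t)"
  using assms by (simp add: emp_M_def divide_less_cancel sum_subtractf)

section \<open>Deviations of the M-estimator\<close>

lemma hoeffding_exponent_mono:
  fixes d e v w :: real
  assumes "d\<^sup>2 \<le> e\<^sup>2" and "v\<^sup>2 \<le> w\<^sup>2" and "v \<noteq> 0"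
  shows "exp (- 2 * real n * e\<^sup>2 / v\<^sup>2) \<le> exp (- 2 * real n * d\<^sup>2 / w\<^sup>2)"
proof -
  have "d\<^sup>2 / w\<^sup>2 \<le> e\<^sup>2 / v\<^sup>2"
    using assms by (intro frac_le) auto
  from mult_left_mono[OF this, of "2 * real n"] show ?thesis
    by simp
qed

locale convex_m_estimation = convex_loss Q h + P: prob_space P
  for Q :: "'a measure" and h :: "'a \<Rightarrow> real \<Rightarrow> real" and P :: "'b measure" +
  fixes t0 :: real and X :: "nat \<Rightarrow> 'b \<Rightarrow> 'a" and mhat :: "nat \<Rightarrow> 'b \<Rightarrow> real"
  assumes X_indep: "P.indep_vars (\<lambda>_. Q) X UNIV"
    and X_law: "\<And>i. distr P Q (X i) = Q"
    and mhat_min: "\<And>n \<omega>. 1 \<le> n \<Longrightarrow> \<omega> \<in> space P \<Longrightarrow> smallest_minimizer (emp_M X h t0 n \<omega>) (mhat n \<omega>)"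
    and mhat_meas: "\<And>n. mhat n \<in> borel_measurable P"
begin

lemma X_meas [measurable]: "X i \<in> measurable P Q"
  using X_indep by (auto simp: P.indep_vars_def)

lemma convex_loss_sample: "\<omega> \<in> space P \<Longrightarrow> convex_on UNIV (h (X i \<omega>))"
  using convex_loss measurable_space[OF X_meas] by blast

lemma AE_sample_iff:
  assumes "{x \<in> space Q. \<phi> x} \<in> sets Q"
  shows "(AE \<omega> in P. \<phi> (X i \<omega>)) \<longleftrightarrow> (AE x in Q. \<phi> x)"
  using AE_distr_iff[OF X_meas[of i] assms] X_law[of i] by metis

lemma score_sum_neg_if_above:
  assumes "\<omega> \<in> space P" "1 \<le> k" "t < mhat k \<omega>"
  shows "(\<Sum>i<k. right_deriv (h (X i \<omega>)) t) < 0"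
proof (rule convex_sum_right_deriv_neg[OF convex_loss_sample[OF assms(1)] assms(3)])
  show "(\<Sum>i<k. h (X i \<omega>) (mhat k \<omega>)) < (\<Sum>i<k. h (X i \<omega>) t)"
    using smallest_minimizer_less[OF mhat_min assms(3)] assms(1,2) by (simp add: emp_M_less_iff)
qed

lemma score_sum_nonneg_if_below:
  assumes "\<omega> \<in> space P" "1 \<le> k" "mhat k \<omega> < t"
  shows "0 \<le> (\<Sum>i<k. right_deriv (h (X i \<omega>)) t)"
proof (rule convex_sum_right_deriv_nonneg[OF convex_loss_sample[OF assms(1)] assms(3)])
  show "(\<Sum>i<k. h (X i \<omega>) (mhat k \<omega>)) \<le> (\<Sum>i<k. h (X i \<omega>) t)"
    using mhat_min[OF assms(2,1)] assms(2) by (simp add: smallest_minimizer_def emp_M_le_iff)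
qed

lemma AE_right_deriv_bounds:
  assumes "AE \<omega> in P. \<alpha> \<le> right_deriv (h (X 0 \<omega>)) t \<and> right_deriv (h (X 0 \<omega>)) t \<le> \<beta>"
  shows "AE x in Q. right_deriv (h x) t \<in> {\<alpha>..\<beta>}"
  using assms measurable_right_deriv by (subst AE_sample_iff[symmetric, of _ 0]) auto

lemma prob_mhat_above:
  assumes "0 \<le> right_deriv (pop_M Q h t0) t" and "1 \<le> n"
    and bounds: "AE \<omega> in P. \<alpha> \<le> right_deriv (h (X 0 \<omega>)) t \<and> right_deriv (h (X 0 \<omega>)) t \<le> \<beta>"
  shows "P.prob {\<omega> \<in> space P. \<exists>k\<ge>n. t < mhat k \<omega>}
           \<le> exp (- 2 * real n * (right_deriv (pop_M Q h t0) t)\<^sup>2 / (\<beta> - \<alpha>)\<^sup>2)"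
proof -
  let ?f = "\<lambda>x. - right_deriv (h x) t"
  have "AE x in Q. ?f x \<in> {- \<beta>..- \<alpha>}"
    using AE_right_deriv_bounds[OF bounds] by auto
  moreover have "(\<integral>x. ?f x \<partial>Q) = - right_deriv (pop_M Q h t0) t"
    by (simp add: right_deriv_pop_M)
  ultimately have "P.prob {\<omega> \<in> space P. \<exists>k\<ge>n. 0 \<le> (\<Sum>i<k. ?f (X i \<omega>))}
                   \<le> exp (- 2 * real n * (right_deriv (pop_M Q h t0) t)\<^sup>2 / (\<beta> - \<alpha>)\<^sup>2)"
    using P.hoeffding_maximal_inequality[OF X_indep X_law _ _, of ?f "- \<beta>" "- \<alpha>" n] assms(1)
    by (simp add: measurable_right_deriv)
  moreover have "P.prob {\<omega> \<in> space P. \<exists>k\<ge>n. t < mhat k \<omega>}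
                 \<le> P.prob {\<omega> \<in> space P. \<exists>k\<ge>n. 0 \<le> (\<Sum>i<k. ?f (X i \<omega>))}"
  proof (rule P.finite_measure_mono)
    show "{\<omega> \<in> space P. \<exists>k\<ge>n. t < mhat k \<omega>} \<subseteq> {\<omega> \<in> space P. \<exists>k\<ge>n. 0 \<le> (\<Sum>i<k. ?f (X i \<omega>))}"
    proof safe
      fix \<omega> k assume "\<omega> \<in> space P" "n \<le> k" "t < mhat k \<omega>"
      with score_sum_neg_if_above[of \<omega> k t] \<open>1 \<le> n\<close>
      show "\<exists>k\<ge>n. 0 \<le> (\<Sum>i<k. ?f (X i \<omega>))"
        by (auto simp: sum_negf)
    qed
  qed (use measurable_right_deriv in measurable)
  ultimately show ?thesis
    by linarith
qed

lemma prob_mhat_below: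
  assumes "right_deriv (pop_M Q h t0) t \<le> 0" and "1 \<le> n"
    and bounds: "AE \<omega> in P. \<alpha> \<le> right_deriv (h (X 0 \<omega>)) t \<and> right_deriv (h (X 0 \<omega>)) t \<le> \<beta>"
  shows "P.prob {\<omega> \<in> space P. \<exists>k\<ge>n. mhat k \<omega> < t}
           \<le> exp (- 2 * real n * (right_deriv (pop_M Q h t0) t)\<^sup>2 / (\<beta> - \<alpha>)\<^sup>2)"
proof -
  let ?f = "\<lambda>x. right_deriv (h x) t"
  have "P.prob {\<omega> \<in> space P. \<exists>k\<ge>n. 0 \<le> (\<Sum>i<k. ?f (X i \<omega>))}
        \<le> exp (- 2 * real n * (right_deriv (pop_M Q h t0) t)\<^sup>2 / (\<beta> - \<alpha>)\<^sup>2)"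
    using P.hoeffding_maximal_inequality[OF X_indep X_law measurable_right_deriv AE_right_deriv_bounds[OF bounds]]
      assms(1) by (simp add: right_deriv_pop_M)
  moreover have "P.prob {\<omega> \<in> space P. \<exists>k\<ge>n. mhat k \<omega> < t}
                 \<le> P.prob {\<omega> \<in> space P. \<exists>k\<ge>n. 0 \<le> (\<Sum>i<k. ?f (X i \<omega>))}"
  proof (rule P.finite_measure_mono)
    show "{\<omega> \<in> space P. \<exists>k\<ge>n. mhat k \<omega> < t} \<subseteq> {\<omega> \<in> space P. \<exists>k\<ge>n. 0 \<le> (\<Sum>i<k. ?f (X i \<omega>))}"
      using score_sum_nonneg_if_below \<open>1 \<le> n\<close> by fastforce
  qed (use measurable_right_deriv in measurable)
  ultimately show ?thesis
    by linarith
qed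

lemma prob_abs_deviation_le:
  "P.prob {\<omega> \<in> space P. \<exists>k\<ge>n. x < \<bar>mhat k \<omega> - m\<bar>}
   \<le> P.prob {\<omega> \<in> space P. \<exists>k\<ge>n. m + x < mhat k \<omega>} + P.prob {\<omega> \<in> space P. \<exists>k\<ge>n. mhat k \<omega> < m - x}"
proof -
  note [measurable] = mhat_meas
  have "P.prob {\<omega> \<in> space P. \<exists>k\<ge>n. x < \<bar>mhat k \<omega> - m\<bar>}
        \<le> P.prob ({\<omega> \<in> space P. \<exists>k\<ge>n. m + x < mhat k \<omega>} \<union> {\<omega> \<in> space P. \<exists>k\<ge>n. mhat k \<omega> < m - x})"
  proof (rule P.finite_measure_mono)
    show "{\<omega> \<in> space P. \<exists>k\<ge>n. x < \<bar>mhat k \<omega> - m\<bar>}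
          \<subseteq> {\<omega> \<in> space P. \<exists>k\<ge>n. m + x < mhat k \<omega>} \<union> {\<omega> \<in> space P. \<exists>k\<ge>n. mhat k \<omega> < m - x}"
      by (force simp: abs_less_iff)
  qed measurable
  also have "\<dots> \<le> P.prob {\<omega> \<in> space P. \<exists>k\<ge>n. m + x < mhat k \<omega>} + P.prob {\<omega> \<in> space P. \<exists>k\<ge>n. mhat k \<omega> < m - x}"
    by (rule measure_Un_le) measurable
  finally show ?thesis .
qed

lemma prob_abs_deviation_bound:
  assumes signs: "0 \<le> right_deriv (pop_M Q h t0) (m + x)" "right_deriv (pop_M Q h t0) (m - x) \<le> 0"
    and "1 \<le> n" and widths: "\<alpha> < \<beta>" "\<alpha>' < \<beta>'"
    and bounds: "AE \<omega> in P. \<alpha> \<le> right_deriv (h (X 0 \<omega>)) (m + x) \<and> right_deriv (h (X 0 \<omega>)) (m + x) \<le> \<beta>"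
      "AE \<omega> in P. \<alpha>' \<le> right_deriv (h (X 0 \<omega>)) (m - x) \<and> right_deriv (h (X 0 \<omega>)) (m - x) \<le> \<beta>'"
  shows "P.prob {\<omega> \<in> space P. \<exists>k\<ge>n. x < \<bar>mhat k \<omega> - m\<bar>}
           \<le> 2 * exp (- 2 * real n
                  * (min (right_deriv (pop_M Q h t0) (m + x)) (- right_deriv (pop_M Q h t0) (m - x)))\<^sup>2
                  / (max (\<beta> - \<alpha>) (\<beta>' - \<alpha>'))\<^sup>2)"
proof -
  let ?D = "right_deriv (pop_M Q h t0)"
  let ?d = "min (?D (m + x)) (- ?D (m - x))" and ?w = "max (\<beta> - \<alpha>) (\<beta>' - \<alpha>')"
  have "0 \<le> ?d"
    using signs by simp
  then have d: "?d\<^sup>2 \<le> (?D (m + x))\<^sup>2" "?d\<^sup>2 \<le> (?D (m - x))\<^sup>2"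
    using power_mono[of ?d "- ?D (m - x)" 2] by (auto intro: power_mono)
  have w: "(\<beta> - \<alpha>)\<^sup>2 \<le> ?w\<^sup>2" "(\<beta>' - \<alpha>')\<^sup>2 \<le> ?w\<^sup>2"
    using widths by (auto intro!: power_mono)
  have "exp (- 2 * real n * (?D (m + x))\<^sup>2 / (\<beta> - \<alpha>)\<^sup>2) \<le> exp (- 2 * real n * ?d\<^sup>2 / ?w\<^sup>2)"
    "exp (- 2 * real n * (?D (m - x))\<^sup>2 / (\<beta>' - \<alpha>')\<^sup>2) \<le> exp (- 2 * real n * ?d\<^sup>2 / ?w\<^sup>2)"
    using hoeffding_exponent_mono[OF d(1) w(1)] hoeffding_exponent_mono[OF d(2) w(2)] widths by auto
  with prob_abs_deviation_le[of n x m] prob_mhat_above[OF signs(1) \<open>1 \<le> n\<close> bounds(1)]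
    prob_mhat_below[OF signs(2) \<open>1 \<le> n\<close> bounds(2)]
  show ?thesis
    by linarith
qed

end

theorem theorem1:
  fixes Q :: "'a measure" and P :: "'b measure"
    and h :: "'a \<Rightarrow> real \<Rightarrow> real" and t0 m :: real
    and X :: "nat \<Rightarrow> 'b \<Rightarrow> 'a" and mhat :: "nat \<Rightarrow> 'b \<Rightarrow> real"
    and a b :: "real \<Rightarrow> real"
  assumes Q: "prob_space Q" and P: "prob_space P"
    and h_meas: "\<And>t. (\<lambda>x. h x t) \<in> borel_measurable Q"
    and h_convex: "\<And>x. x \<in> space Q \<Longrightarrow> convex_on UNIV (h x)"
    and int_Dp: "\<And>t. integrable Q (\<lambda>x. right_deriv (h x) t)"
    and int_Dm: "\<And>t. integrable Q (\<lambda>x. left_deriv (h x) t)"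
    and X_meas: "\<And>i. X i \<in> measurable P Q"
    and X_indep: "prob_space.indep_vars P (\<lambda>_. Q) X UNIV"
    and X_law: "\<And>i. distr P Q (X i) = Q"
    and mhat_min: "\<And>n \<omega>. n \<ge> 1 \<Longrightarrow> \<omega> \<in> space P \<Longrightarrow>
                     smallest_minimizer (emp_M X h t0 n \<omega>) (mhat n \<omega>)"
    and mhat_meas: "\<And>n. mhat n \<in> borel_measurable P"
    and m_min: "left_deriv (pop_M Q h t0) m \<le> 0" "0 \<le> right_deriv (pop_M Q h t0) m"
    and B: "\<And>x. x \<noteq> 0 \<Longrightarrow> a x < b x \<and>
              (AE \<omega> in P. a x \<le> right_deriv (h (X 0 \<omega>)) (m + x)
                           \<and> right_deriv (h (X 0 \<omega>)) (m + x) \<le> b x)"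
  shows "(\<forall>n::nat. \<forall>x::real. n \<ge> 1 \<longrightarrow> x > 0 \<longrightarrow>
           measure P {\<omega> \<in> space P. \<exists>k\<ge>n. mhat k \<omega> - m > x}
             \<le> exp (- 2 * real n * (right_deriv (pop_M Q h t0) (m + x))\<^sup>2 / (b x - a x)\<^sup>2)
         \<and> measure P {\<omega> \<in> space P. \<exists>k\<ge>n. mhat k \<omega> - m < - x}
             \<le> exp (- 2 * real n * (right_deriv (pop_M Q h t0) (m - x))\<^sup>2 / (b (-x) - a (-x))\<^sup>2)
         \<and> min (right_deriv (pop_M Q h t0) (m + x)) (- right_deriv (pop_M Q h t0) (m - x)) \<ge> 0
         \<and> measure P {\<omega> \<in> space P. \<exists>k\<ge>n. \<bar>mhat k \<omega> - m\<bar> > x}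
             \<le> 2 * exp (- 2 * real n
                  * (min (right_deriv (pop_M Q h t0) (m + x)) (- right_deriv (pop_M Q h t0) (m - x)))\<^sup>2
                  / (max (b x - a x) (b (-x) - a (-x)))\<^sup>2))
       \<and> ((\<forall>t. (\<forall>s. pop_M Q h t0 t \<le> pop_M Q h t0 s) \<longleftrightarrow> t = m) \<longrightarrow>
            (\<forall>x>0. min (right_deriv (pop_M Q h t0) (m + x)) (- right_deriv (pop_M Q h t0) (m - x)) > 0
                  \<and> right_deriv (pop_M Q h t0) (m + x) > 0
                  \<and> - right_deriv (pop_M Q h t0) (m - x) > 0))"
proof -
  interpret convex_m_estimation Q h P t0 X mhat
    by (intro convex_m_estimation.intro convex_loss.intro convex_m_estimation_axioms.intro)
      (fact h_meas h_convex int_Dp P X_indep X_law mhat_min mhat_meas)+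
  let ?D = "right_deriv (pop_M Q h t0)"
  have signs: "0 \<le> ?D (m + x)" "?D (m - x) \<le> 0" if "x > 0" for x
    using convex_on_right_deriv_mono[OF convex_pop_M[of t0], of m "m + x"]
      convex_on_right_deriv_le_left_deriv[OF convex_pop_M[of t0], of "m - x" m] m_min that by auto
  have bounds: "AE \<omega> in P. a x \<le> right_deriv (h (X 0 \<omega>)) (m + x) \<and> right_deriv (h (X 0 \<omega>)) (m + x) \<le> b x"
    "AE \<omega> in P. a (-x) \<le> right_deriv (h (X 0 \<omega>)) (m - x) \<and> right_deriv (h (X 0 \<omega>)) (m - x) \<le> b (-x)"
    "a x < b x" "a (-x) < b (-x)" if "x > 0" for x
    using B[of x] B[of "-x"] that by auto
  have events: "{\<omega> \<in> space P. \<exists>k\<ge>n. mhat k \<omega> - m > x} = {\<omega> \<in> space P. \<exists>k\<ge>n. m + x < mhat k \<omega>}"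
    "{\<omega> \<in> space P. \<exists>k\<ge>n. mhat k \<omega> - m < - x} = {\<omega> \<in> space P. \<exists>k\<ge>n. mhat k \<omega> < m - x}" for n x
    by force+
  have unique: "0 < ?D (m + x)" "?D (m - x) < 0"
    if "\<forall>t. (\<forall>s. pop_M Q h t0 t \<le> pop_M Q h t0 s) \<longleftrightarrow> t = m" "x > 0" for x
    using convex_on_unique_argmin_right_deriv_pos[OF convex_pop_M, of t0 m "m + x"]
      convex_on_unique_argmin_right_deriv_neg[OF convex_pop_M, of t0 m "m - x"] that by auto
  show ?thesis
    unfolding events
    using prob_mhat_above[OF signs(1) _ bounds(1)] prob_mhat_below[OF signs(2) _ bounds(2)]
      prob_abs_deviation_bound[OF signs _ bounds(3,4,1,2)] signs unique by simp
qed

end
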